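(* Define \[ \nu_1(z;q):=\sum_{n=0}^{\infty} \frac{z^n q^{n^2+n}}{(-q;q^2)_{n+1}}. \] Then, as formal power series in $q$ whose coefficients are polynomials in $z$ (equivalently, for $|q|<1$ and $z$ in a suitable region of convergence), \[ \nu_1(z;q)=\sum_{n=0}^{\infty} (zq;q^2)_n\,(-q)^n . \]
   Context: For $a$ and $q$, $(a;q)_0:=1$, $(a;q)_n:=(1-a)(1-aq)\cdots(1-aq^{n-1})$ for $n\ge1$. *)

theory Defs
  imports "HOL-Analysis.Analysis"
begin

definition qpoch :: "complex \<Rightarrow> complex \<Rightarrow> nat \<Rightarrow> complex" where
  "qpoch a q n = (\<Prod>k<n. (1 - a * q ^ k))"

definition nu1 :: "complex \<Rightarrow> complex \<Rightarrow> complex" where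
  "nu1 z q = (\<Sum>n. z ^ n * q ^ (n\<^sup>2 + n) / qpoch (- q) (q\<^sup>2) (n + 1))"

end

theory Submission imports Defs begin

text \<open>
  With \<open>G(s) = \<Sum>\<^sub>n (a;p)\<^sub>n s\<^sup>n\<close>, the recursion \<open>(a;p)\<^sub>n\<^sub>+\<^sub>1 = (a;p)\<^sub>n (1 - a p\<^sup>n)\<close> gives the
  functional equation \<open>(1 - s) G(s) = 1 - a s G(s p)\<close>. Iterating it from \<open>s = t\<close> yields
  \<open>G(t) = \<Sum>\<^sub>k (-a t)\<^sup>k p\<^bsup>k(k-1)/2\<^esup> / (t;p)\<^sub>k\<^sub>+\<^sub>1\<close>, the remainder after \<open>N\<close> steps being a
  bounded multiple of the \<open>N\<close>-th term, whose ratios tend to \<open>0\<close>. The theorem is the case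
  \<open>a = z q\<close>, \<open>p = q\<^sup>2\<close>, \<open>t = -q\<close>.
\<close>

lemma summable_ratio_tendsto_zero:
  fixes f :: "nat \<Rightarrow> 'a::banach"
  assumes ratio: "\<And>n. norm (f (Suc n)) \<le> r n * norm (f n)" and "r \<longlonglongrightarrow> 0"
  shows "summable f"
proof -
  have "eventually (\<lambda>n. r n < 1/2) sequentially"
    using \<open>r \<longlonglongrightarrow> 0\<close> by (rule order_tendstoD) simp
  then obtain N where N: "\<And>n. n \<ge> N \<Longrightarrow> r n < 1/2"
    by (auto simp: eventually_sequentially)
  show ?thesis
  proof (rule summable_ratio_test[where c = "1/2" and N = N])
    fix n assume "n \<ge> N"
    then show "norm (f (Suc n)) \<le> 1/2 * norm (f n)"
      using ratio[of n] mult_right_mono[OF less_imp_le[OF N] norm_ge_zero, of n "f n"] by linarith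
  qed simp
qed

lemma norm_mult_power_le_self:
  fixes t p :: complex
  assumes "norm p \<le> 1"
  shows "norm (t * p ^ k) \<le> norm t"
  using mult_left_le[OF power_le_one[OF norm_ge_zero assms] norm_ge_zero[of t]]
  by (simp add: norm_mult norm_power)

lemma qpoch_0 [simp]: "qpoch a p 0 = 1"
  by (simp add: qpoch_def)

lemma qpoch_Suc: "qpoch a p (Suc n) = qpoch a p n * (1 - a * p ^ n)"
  by (simp add: qpoch_def)

lemma qpoch_nonzero:
  assumes "norm p \<le> 1" "norm t < 1"
  shows "qpoch t p n \<noteq> 0"
proof -
  have "t * p ^ k \<noteq> 1" for k
    using norm_mult_power_le_self[OF assms(1), of t k] assms(2) by auto
  then show ?thesis
    by (simp add: qpoch_def)
qed

lemma norm_qpoch_le: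
  assumes "norm p < 1"
  shows "norm (qpoch a p n) \<le> exp (norm a / (1 - norm p))"
proof -
  have "norm (qpoch a p n) \<le> (\<Prod>k<n. norm (1 - a * p ^ k))"
    unfolding qpoch_def by (rule norm_prod_le)
  also have "\<dots> \<le> (\<Prod>k<n. exp (norm a * norm p ^ k))"
  proof (rule prod_mono)
    fix k
    have "norm (1 - a * p ^ k) \<le> 1 + norm a * norm p ^ k"
      using norm_triangle_ineq4[of 1 "a * p ^ k"] by (simp add: norm_mult norm_power)
    also have "\<dots> \<le> exp (norm a * norm p ^ k)"
      by (rule exp_ge_add_one_self)
    finally show "0 \<le> norm (1 - a * p ^ k) \<and> norm (1 - a * p ^ k) \<le> exp (norm a * norm p ^ k)"
      by simp
  qed
  also have "\<dots> = exp (\<Sum>k<n. norm a * norm p ^ k)"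
    by (simp add: exp_sum)
  also have "\<dots> = exp (norm a * ((1 - norm p ^ n) / (1 - norm p)))"
    using assms by (simp add: sum_distrib_left[symmetric] sum_gp_strict)
  also have "\<dots> \<le> exp (norm a / (1 - norm p))"
    using assms by (simp add: divide_right_mono mult_left_le)
  finally show ?thesis .
qed

definition qpoch_genfun :: "complex \<Rightarrow> complex \<Rightarrow> complex \<Rightarrow> complex" where
  "qpoch_genfun a p s = (\<Sum>n. qpoch a p n * s ^ n)"

lemma summable_norm_qpoch_genfun:
  assumes "norm p < 1" "norm s < 1"
  shows "summable (\<lambda>n. norm (qpoch a p n * s ^ n))"
proof (rule summable_comparison_test')
  show "summable (\<lambda>n. exp (norm a / (1 - norm p)) * norm s ^ n)"
    using assms(2) by (simp add: summable_geometric)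
  show "norm (norm (qpoch a p n * s ^ n)) \<le> exp (norm a / (1 - norm p)) * norm s ^ n" for n
    using norm_qpoch_le[OF assms(1), of a n] by (simp add: norm_mult norm_power mult_right_mono)
qed

lemma qpoch_genfun_sums:
  assumes "norm p < 1" "norm s < 1"
  shows "(\<lambda>n. qpoch a p n * s ^ n) sums qpoch_genfun a p s"
  unfolding qpoch_genfun_def
  using summable_norm_cancel[OF summable_norm_qpoch_genfun[OF assms]] by (rule summable_sums)

lemma norm_qpoch_genfun_le:
  assumes "norm p < 1" "norm s < 1"
  shows "norm (qpoch_genfun a p s) \<le> exp (norm a / (1 - norm p)) / (1 - norm s)"
proof -
  define B where "B = exp (norm a / (1 - norm p))"
  have "norm (qpoch_genfun a p s) \<le> (\<Sum>n. norm (qpoch a p n * s ^ n))"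
    unfolding qpoch_genfun_def by (rule summable_norm[OF summable_norm_qpoch_genfun[OF assms]])
  also have "\<dots> \<le> (\<Sum>n. B * norm s ^ n)"
  proof (rule suminf_le)
    show "norm (qpoch a p n * s ^ n) \<le> B * norm s ^ n" for n
      using norm_qpoch_le[OF assms(1), of a n] unfolding B_def
      by (simp add: norm_mult norm_power mult_right_mono)
  qed (use assms in \<open>simp_all add: summable_norm_qpoch_genfun summable_geometric\<close>)
  also have "\<dots> = B / (1 - norm s)"
    using assms(2) by (simp add: suminf_mult suminf_geometric divide_inverse)
  finally show ?thesis
    unfolding B_def .
qed

lemma qpoch_genfun_functional_eq:
  assumes "norm p < 1" "norm s < 1"
  shows "(1 - s) * qpoch_genfun a p s = 1 - a * s * qpoch_genfun a p (s * p)"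
proof -
  let ?G = "qpoch_genfun a p"
  have sp: "norm (s * p) < 1"
    using norm_mult_power_le_self[of p s 1] assms by simp
  have "(\<lambda>n. s * (qpoch a p n * s ^ n) - a * s * (qpoch a p n * (s * p) ^ n))
          sums (s * ?G s - a * s * ?G (s * p))"
    by (intro sums_diff sums_mult qpoch_genfun_sums assms sp)
  moreover have "s * (qpoch a p n * s ^ n) - a * s * (qpoch a p n * (s * p) ^ n)
                   = qpoch a p (Suc n) * s ^ Suc n" for n
    by (simp add: qpoch_Suc power_mult_distrib algebra_simps)
  ultimately have "(\<lambda>n. qpoch a p (Suc n) * s ^ Suc n) sums (s * ?G s - a * s * ?G (s * p))"
    by simp
  then have "(\<lambda>n. qpoch a p n * s ^ n) sums (s * ?G s - a * s * ?G (s * p) + 1)"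
    by (subst (asm) sums_Suc_iff) simp
  from sums_unique2[OF qpoch_genfun_sums[OF assms] this] show ?thesis
    by (simp add: algebra_simps)
qed

definition qpoch_genfun_expansion_term :: "complex \<Rightarrow> complex \<Rightarrow> complex \<Rightarrow> nat \<Rightarrow> complex" where
  "qpoch_genfun_expansion_term a p t k = (- a * t) ^ k * p ^ (k choose 2) / qpoch t p (Suc k)"

lemma qpoch_genfun_expansion_term_Suc:
  assumes "norm p \<le> 1" "norm t < 1"
  shows "qpoch_genfun_expansion_term a p t (Suc k) * (1 - t * p ^ Suc k)
           = qpoch_genfun_expansion_term a p t k * (- a * t * p ^ k)"
proof -
  have "Suc k choose 2 = (k choose 2) + k"
    by (simp add: numeral_2_eq_2)
  moreover have "qpoch t p (Suc k) \<noteq> 0" "1 - t * p ^ Suc k \<noteq> 0"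
    using qpoch_nonzero[OF assms, of "Suc (Suc k)"] by (auto simp: qpoch_Suc)
  ultimately show ?thesis
    unfolding qpoch_genfun_expansion_term_def qpoch_Suc[of t p "Suc k"]
    by (simp add: power_add)
qed

lemma qpoch_genfun_iterate:
  assumes p: "norm p < 1" and t: "norm t < 1"
  shows "qpoch_genfun a p t = (\<Sum>k<N. qpoch_genfun_expansion_term a p t k)
           + qpoch_genfun_expansion_term a p t N * (1 - t * p ^ N) * qpoch_genfun a p (t * p ^ N)"
proof (induction N)
  case 0
  have "t \<noteq> 1"
    using t by auto
  then show ?case
    by (simp add: qpoch_genfun_expansion_term_def qpoch_Suc numeral_2_eq_2)
next
  case (Suc N)
  let ?c = "qpoch_genfun_expansion_term a p t" and ?G = "qpoch_genfun a p"
  define s where "s = t * p ^ N"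
  have s: "norm s < 1"
    using norm_mult_power_le_self[of p t N] p t unfolding s_def by simp
  have sp: "s * p = t * p ^ Suc N"
    unfolding s_def by simp
  have c: "?c N * (a * s) = - (?c (Suc N) * (1 - s * p))"
    using qpoch_genfun_expansion_term_Suc[of p t a N] p t unfolding sp by (simp add: s_def)
  have "?c N * (1 - s) * ?G s = ?c N - ?c N * (a * s) * ?G (s * p)"
    unfolding mult.assoc[of "?c N"] qpoch_genfun_functional_eq[OF p s] by (simp add: algebra_simps)
  also have "\<dots> = ?c N + ?c (Suc N) * (1 - s * p) * ?G (s * p)"
    unfolding c by simp
  finally show ?case
    using Suc.IH unfolding s_def[symmetric] sp by simp
qed

lemma summable_qpoch_genfun_expansion_term:
  assumes p: "norm p < 1" and t: "norm t < 1"
  shows "summable (qpoch_genfun_expansion_term a p t)"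
proof (rule summable_ratio_tendsto_zero)
  let ?c = "qpoch_genfun_expansion_term a p t"
  show "norm (?c (Suc k)) \<le> norm a * norm t * norm p ^ k / (1 - norm t) * norm (?c k)" for k
  proof -
    have lower: "1 - norm t \<le> norm (1 - t * p ^ Suc k)"
      using norm_triangle_ineq2[of 1 "t * p ^ Suc k"] norm_mult_power_le_self[of p t "Suc k"] p
      by simp
    have "norm (?c (Suc k)) * norm (1 - t * p ^ Suc k) = norm a * norm t * norm p ^ k * norm (?c k)"
      using arg_cong[OF qpoch_genfun_expansion_term_Suc[of p t a k], of norm] p t
      by (simp add: norm_mult norm_power)
    moreover have "norm (?c (Suc k)) * (1 - norm t) \<le> norm (?c (Suc k)) * norm (1 - t * p ^ Suc k)"
      using lower by (rule mult_left_mono) simp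
    ultimately have "norm (?c (Suc k)) * (1 - norm t) \<le> norm a * norm t * norm p ^ k * norm (?c k)"
      by simp
    then show ?thesis
      using t by (simp add: pos_le_divide_eq mult_ac)
  qed
  show "(\<lambda>k. norm a * norm t * norm p ^ k / (1 - norm t)) \<longlonglongrightarrow> 0"
    using p t by (intro tendsto_eq_intros LIMSEQ_power_zero) auto
qed

theorem qpoch_genfun_expansion:
  assumes p: "norm p < 1" and t: "norm t < 1"
  shows "qpoch_genfun_expansion_term a p t sums qpoch_genfun a p t"
proof -
  let ?c = "qpoch_genfun_expansion_term a p t"
  define R where "R N = ?c N * (1 - t * p ^ N) * qpoch_genfun a p (t * p ^ N)" for N
  define E where "E = exp (norm a / (1 - norm p))"
  define B where "B = 2 * (E / (1 - norm t))"
  have bound: "norm (R N) \<le> norm (?c N) * B" for N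
  proof -
    have tN: "norm (t * p ^ N) \<le> norm t"
      using norm_mult_power_le_self p by simp
    have "norm (1 - t * p ^ N) \<le> 2"
      using norm_triangle_ineq4[of 1 "t * p ^ N"] tN t by simp
    moreover have "norm (qpoch_genfun a p (t * p ^ N)) \<le> E / (1 - norm t)"
    proof -
      have "norm (qpoch_genfun a p (t * p ^ N)) \<le> E / (1 - norm (t * p ^ N))"
        unfolding E_def using tN t by (intro norm_qpoch_genfun_le p) simp
      also have "\<dots> \<le> E / (1 - norm t)"
        unfolding E_def using tN t by (intro divide_left_mono) auto
      finally show ?thesis .
    qed
    ultimately have "norm (1 - t * p ^ N) * norm (qpoch_genfun a p (t * p ^ N)) \<le> B"
      unfolding B_def by (intro mult_mono) auto
    then show ?thesis
      unfolding R_def norm_mult mult.assoc by (rule mult_left_mono) simp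
  qed
  have "\<forall>N. norm (R N) \<le> norm (?c N) * B"
    using bound by blast
  moreover have "(\<lambda>N. norm (?c N) * B) \<longlonglongrightarrow> 0"
    by (intro tendsto_mult_left_zero tendsto_norm_zero summable_LIMSEQ_zero
        summable_qpoch_genfun_expansion_term p t)
  ultimately have "R \<longlonglongrightarrow> 0"
    by (rule Lim_null_comparison[OF always_eventually])
  then have "(\<lambda>N. qpoch_genfun a p t - R N) \<longlonglongrightarrow> qpoch_genfun a p t - 0"
    by (intro tendsto_diff tendsto_const)
  moreover have "(\<Sum>k<N. ?c k) = qpoch_genfun a p t - R N" for N
    using qpoch_genfun_iterate[OF p t, of a N] unfolding R_def by (simp add: eq_diff_eq)
  ultimately show ?thesis
    unfolding sums_def by simp
qed

lemma nu1_term_eq_expansion_term: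
  "z ^ n * q ^ (n\<^sup>2 + n) / qpoch (- q) (q\<^sup>2) (n + 1)
     = qpoch_genfun_expansion_term (z * q) (q\<^sup>2) (- q) n"
proof -
  have "(- (z * q) * - q) ^ n * (q\<^sup>2) ^ (n choose 2) = z ^ n * q ^ (2 * n + 2 * (n choose 2))"
    by (simp add: power_add power_mult power_mult_distrib power2_eq_square mult_ac)
  also have "2 * n + 2 * (n choose 2) = n\<^sup>2 + n"
    by (cases n) (auto simp: choose_two power2_eq_square)
  finally have "(- (z * q) * - q) ^ n * (q\<^sup>2) ^ (n choose 2) = z ^ n * q ^ (n\<^sup>2 + n)" .
  then show ?thesis
    unfolding qpoch_genfun_expansion_term_def by simp
qed

theorem theorem1p2:
  fixes z q :: complex
  assumes "norm q < 1"
  shows "summable (\<lambda>n. z ^ n * q ^ (n\<^sup>2 + n) / qpoch (- q) (q\<^sup>2) (n + 1))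
         \<and> (\<lambda>n. qpoch (z * q) (q\<^sup>2) n * (- q) ^ n) sums nu1 z q"
proof -
  have p: "norm (q\<^sup>2) < 1" and t: "norm (- q) < 1"
    using assms by (simp_all add: norm_power power_less_one_iff)
  have "qpoch_genfun_expansion_term (z * q) (q\<^sup>2) (- q) sums qpoch_genfun (z * q) (q\<^sup>2) (- q)"
    by (rule qpoch_genfun_expansion[OF p t])
  then have "(\<lambda>n. z ^ n * q ^ (n\<^sup>2 + n) / qpoch (- q) (q\<^sup>2) (n + 1))
               sums qpoch_genfun (z * q) (q\<^sup>2) (- q)"
    by (simp only: nu1_term_eq_expansion_term)
  then show ?thesis
    using qpoch_genfun_sums[OF p t, of "z * q"] unfolding nu1_def by (simp add: sums_iff)
qed

end
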